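(* Let $d\ge 2$ and let $\mathcal{M}^d$ be the set of all maskable observables on $\mathbb{C}^d$, i.e. Hermitian $d\times d$ matrices $\mathcal{O}$ for which there exists some quantum channel $\mathcal{E}$ with $\mathcal{E}^*(\mathcal{O})=\mathbb{I}$. Then there is no single quantum channel $\mathcal{E}$ on $d\times d$ matrices such that $\mathcal{E}^*(\mathcal{O})=\mathbb{I}$ for all $\mathcal{O}\in\mathcal{M}^d$.
   Context: A quantum channel $\mathcal{E}$ is a linear completely positive trace-preserving map on $d\times d$ complex matrices, $\mathcal{E}(\rho)=\sum_i E_i\rho E_i^\dagger$ with $\sum_i E_i^\dagger E_i=\mathbb{I}$; its adjoint is $\mathcal{E}^*(X)=\sum_i E_i^\dagger X E_i$, so that $\operatorname{Tr}(\mathcal{E}(\rho)X)=\operatorname{Tr}(\rho\,\mathcal{E}^*(X))$. *)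

theory Defs
  imports "Jordan_Normal_Form.Matrix"
begin

definition dag :: "complex mat \<Rightarrow> complex mat" where
  "dag A = mat (dim_col A) (dim_row A) (\<lambda>(i,j). cnj (A $$ (j,i)))"

definition hermitian :: "nat \<Rightarrow> complex mat \<Rightarrow> bool" where
  "hermitian d Ob \<longleftrightarrow> Ob \<in> carrier_mat d d \<and> dag Ob = Ob"

definition msum :: "nat \<Rightarrow> complex mat list \<Rightarrow> complex mat" where
  "msum d Xs = foldr (+) Xs (0\<^sub>m d d)"

definition is_channel :: "nat \<Rightarrow> complex mat list \<Rightarrow> bool" where
  "is_channel d Es \<longleftrightarrow> (\<forall>E \<in> set Es. E \<in> carrier_mat d d) \<and>
     msum d (map (\<lambda>E. dag E * E) Es) = 1\<^sub>m d"

definition channel_apply :: "nat \<Rightarrow> complex mat list \<Rightarrow> complex mat \<Rightarrow> complex mat" where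
  "channel_apply d Es \<rho> = msum d (map (\<lambda>E. E * \<rho> * dag E) Es)"

definition channel_adj :: "nat \<Rightarrow> complex mat list \<Rightarrow> complex mat \<Rightarrow> complex mat" where
  "channel_adj d Es X = msum d (map (\<lambda>E. dag E * X * E) Es)"

definition maskable :: "nat \<Rightarrow> complex mat set" where
  "maskable d = {Ob. hermitian d Ob \<and> (\<exists>Es. is_channel d Es \<and> channel_adj d Es Ob = 1\<^sub>m d)}"

end

theory Submission
  imports Defs
begin

(* For k < d the Kraus operators |k><i| (i < d) form the channel that discards its input and
   prepares |k><k|; its adjoint sends X to X_kk I. Hence every Hermitian matrix with some
   diagonal entry equal to 1 is maskable, in particular |0><0|, |1><1| and their sum. A single
   channel masking all three would, by additivity of its adjoint, satisfy I = I + I. *)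

lemma dag_carrier_mat [simp]: "E \<in> carrier_mat m n \<Longrightarrow> dag E \<in> carrier_mat n m"
  by (simp add: dag_def)

lemma dag_add: "A \<in> carrier_mat m n \<Longrightarrow> B \<in> carrier_mat m n \<Longrightarrow> dag (A + B) = dag A + dag B"
  by (rule eq_matI) (auto simp: dag_def)

lemma hermitian_add: "hermitian d A \<Longrightarrow> hermitian d B \<Longrightarrow> hermitian d (A + B)"
  unfolding hermitian_def by (auto simp: dag_add)

lemma smult_one_mat [simp]: "(1 :: 'a :: monoid_mult) \<cdot>\<^sub>m A = A"
  by (rule eq_matI) auto

lemma msum_Nil [simp]: "msum d [] = 0\<^sub>m d d"
  by (simp add: msum_def)

lemma msum_Cons [simp]: "msum d (X # Xs) = X + msum d Xs"
  by (simp add: msum_def)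

lemma msum_carrier:
  "(\<And>X. X \<in> set Xs \<Longrightarrow> X \<in> carrier_mat d d) \<Longrightarrow> msum d Xs \<in> carrier_mat d d"
  by (induction Xs) auto

lemma index_msum:
  assumes "\<And>X. X \<in> set Xs \<Longrightarrow> X \<in> carrier_mat d d" "a < d" "b < d"
  shows "msum d Xs $$ (a, b) = (\<Sum>X\<leftarrow>Xs. X $$ (a, b))"
  using assms
proof (induction Xs)
  case (Cons X Xs)
  then have "msum d Xs \<in> carrier_mat d d" by (auto intro: msum_carrier)
  with Cons show ?case by auto
qed simp

lemma msum_map_add:
  assumes "\<And>x. x \<in> set xs \<Longrightarrow> f x \<in> carrier_mat d d" "\<And>x. x \<in> set xs \<Longrightarrow> g x \<in> carrier_mat d d"
  shows "msum d (map (\<lambda>x. f x + g x) xs) = msum d (map f xs) + msum d (map g xs)"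
  using assms
proof (induction xs)
  case (Cons x xs)
  then have carriers: "f x \<in> carrier_mat d d" "g x \<in> carrier_mat d d"
    "msum d (map f xs) \<in> carrier_mat d d" "msum d (map g xs) \<in> carrier_mat d d"
    by (auto intro!: msum_carrier)
  with Cons show ?case
    by (intro eq_matI) (simp_all add: carriers[THEN carrier_matD(1)] carriers[THEN carrier_matD(2)])
qed simp

lemma msum_map_smult:
  assumes "\<And>x. x \<in> set xs \<Longrightarrow> f x \<in> carrier_mat d d"
  shows "msum d (map (\<lambda>x. c \<cdot>\<^sub>m f x) xs) = c \<cdot>\<^sub>m msum d (map f xs)"
  using assms
proof (induction xs)
  case (Cons x xs)
  then have "f x \<in> carrier_mat d d" "msum d (map f xs) \<in> carrier_mat d d"
    by (auto intro!: msum_carrier)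
  with Cons show ?case by (simp add: add_smult_distrib_left_mat[of "f x" d d])
qed auto

lemma channel_adj_add:
  assumes Es: "\<forall>E \<in> set Es. E \<in> carrier_mat d d" and "A \<in> carrier_mat d d" "B \<in> carrier_mat d d"
  shows "channel_adj d Es (A + B) = channel_adj d Es A + channel_adj d Es B"
proof -
  note carrier_dd = mult_carrier_mat[of _ d d _ d] dag_carrier_mat[of _ d d]
  have "dag E * (A + B) * E = dag E * A * E + dag E * B * E" if "E \<in> carrier_mat d d" for E
    using that assms(2,3)
    by (simp add: carrier_dd mult_add_distrib_mat[of _ d d] add_mult_distrib_mat[of _ d d])
  then have "channel_adj d Es (A + B) = msum d (map (\<lambda>E. dag E * A * E + dag E * B * E) Es)"
    unfolding channel_adj_def using Es by (simp cong: map_cong)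
  also have "\<dots> = channel_adj d Es A + channel_adj d Es B"
    unfolding channel_adj_def by (rule msum_map_add) (use assms in \<open>auto simp: carrier_dd\<close>)
  finally show ?thesis .
qed

definition matrix_unit :: "nat \<Rightarrow> nat \<Rightarrow> nat \<Rightarrow> complex mat" where
  "matrix_unit d i j = mat d d (\<lambda>(a, b). if a = i \<and> b = j then 1 else 0)"

lemma matrix_unit_carrier [simp]: "matrix_unit d i j \<in> carrier_mat d d"
  by (simp add: matrix_unit_def)

lemma dag_matrix_unit [simp]: "dag (matrix_unit d i j) = matrix_unit d j i"
  by (rule eq_matI) (auto simp: dag_def matrix_unit_def)

lemma hermitian_matrix_unit_diag: "hermitian d (matrix_unit d i i)"
  by (simp add: hermitian_def)

lemma matrix_unit_sandwich:
  assumes "i < d" "k < d" "X \<in> carrier_mat d d"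
  shows "matrix_unit d i k * X * matrix_unit d k i = X $$ (k, k) \<cdot>\<^sub>m matrix_unit d i i"
  using assms
  by (intro eq_matI)
    (auto simp: matrix_unit_def scalar_prod_def if_distrib[where f = "\<lambda>x. x * _"]
      if_distrib[where f = "\<lambda>x. _ * x"] cong: if_cong)

lemma msum_diag_matrix_units: "msum d (map (\<lambda>i. matrix_unit d i i) [0..<d]) = 1\<^sub>m d"
  (is "?S = _")
proof (rule eq_matI)
  have "?S \<in> carrier_mat d d" by (rule msum_carrier) auto
  then show "dim_row ?S = dim_row (1\<^sub>m d)" "dim_col ?S = dim_col (1\<^sub>m d)" by auto
  fix a b assume "a < dim_row (1\<^sub>m d)" "b < dim_col (1\<^sub>m d)"
  then show "?S $$ (a, b) = 1\<^sub>m d $$ (a, b)"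
    by (subst index_msum)
      (auto simp: matrix_unit_def sum_list_distinct_conv_sum_set intro!: sum.neutral)
qed

definition reset_channel :: "nat \<Rightarrow> nat \<Rightarrow> complex mat list" where
  "reset_channel d k = map (\<lambda>i. matrix_unit d k i) [0..<d]"

lemma channel_adj_reset_channel:
  assumes "k < d" "X \<in> carrier_mat d d"
  shows "channel_adj d (reset_channel d k) X = X $$ (k, k) \<cdot>\<^sub>m 1\<^sub>m d"
proof -
  have "channel_adj d (reset_channel d k) X
      = msum d (map (\<lambda>i. X $$ (k, k) \<cdot>\<^sub>m matrix_unit d i i) [0..<d])"
    unfolding channel_adj_def reset_channel_def
    by (simp, intro arg_cong[where f = "msum d"] map_cong) (auto simp: assms matrix_unit_sandwich)
  also have "\<dots> = X $$ (k, k) \<cdot>\<^sub>m 1\<^sub>m d"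
    by (simp add: msum_map_smult msum_diag_matrix_units)
  finally show ?thesis .
qed

lemma is_channel_reset_channel:
  assumes "k < d"
  shows "is_channel d (reset_channel d k)"
proof -
  have "msum d (map (\<lambda>E. dag E * E) (reset_channel d k)) = channel_adj d (reset_channel d k) (1\<^sub>m d)"
    unfolding channel_adj_def reset_channel_def
    by (simp add: comp_def right_mult_one_mat[OF matrix_unit_carrier])
  also have "\<dots> = 1\<^sub>m d"
    using assms by (simp add: channel_adj_reset_channel)
  finally show ?thesis
    by (auto simp: is_channel_def reset_channel_def)
qed

lemma maskable_if_diag_entry_eq_1:
  assumes "hermitian d Ob" "k < d" "Ob $$ (k, k) = 1"
  shows "Ob \<in> maskable d"
proof -
  have "Ob \<in> carrier_mat d d"
    using assms(1) by (simp add: hermitian_def)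
  then have "channel_adj d (reset_channel d k) Ob = 1\<^sub>m d"
    using assms(2,3) by (simp add: channel_adj_reset_channel)
  then show ?thesis
    using assms(1,2) is_channel_reset_channel unfolding maskable_def by blast
qed

theorem theorem5:
  fixes d :: nat
  assumes "d \<ge> 2"
  shows "\<not> (\<exists>Es. is_channel d Es \<and> (\<forall>Ob \<in> maskable d. channel_adj d Es Ob = 1\<^sub>m d))"
proof
  assume "\<exists>Es. is_channel d Es \<and> (\<forall>Ob \<in> maskable d. channel_adj d Es Ob = 1\<^sub>m d)"
  then obtain Es where "is_channel d Es" and masks: "\<forall>Ob \<in> maskable d. channel_adj d Es Ob = 1\<^sub>m d"
    by blast
  let ?P0 = "matrix_unit d 0 0" and ?P1 = "matrix_unit d 1 1"
  have "?P0 \<in> maskable d"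
    using assms by (intro maskable_if_diag_entry_eq_1[where k = 0] hermitian_matrix_unit_diag)
      (auto simp: matrix_unit_def)
  moreover have "?P1 \<in> maskable d"
    using assms by (intro maskable_if_diag_entry_eq_1[where k = 1] hermitian_matrix_unit_diag)
      (auto simp: matrix_unit_def)
  moreover have "?P0 + ?P1 \<in> maskable d"
    using assms by (intro maskable_if_diag_entry_eq_1[where k = 0] hermitian_add hermitian_matrix_unit_diag)
      (auto simp: matrix_unit_def)
  ultimately have "1\<^sub>m d = 1\<^sub>m d + (1\<^sub>m d :: complex mat)"
    using masks channel_adj_add[of Es d ?P0 ?P1] \<open>is_channel d Es\<close>
    by (simp add: is_channel_def)
  then have "1\<^sub>m d $$ (0, 0) = (1\<^sub>m d + 1\<^sub>m d :: complex mat) $$ (0, 0)"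
    by simp
  moreover have "0 < d"
    using assms by simp
  ultimately show False by simp
qed

end
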